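(* Setting. Fix an integer $v\ge1$ and numbers $\mathbf p_{kj}\in(0,1)$, $k\in\{0,1,2,\dots\}$, $1\le j\le 2^{v-1}$, where $j$ numbers the binary words of length $v$ ending in $1$. Assume there are constants $1>\delta_1>\delta_2>0$ with $\delta_2\le\mathbf p_{kj}\le\delta_1$ for all $k,j$. Let the initial configuration $r(0)$ contain at least one $1$. Let $\tau_k$, $k\ge1$, be the regeneration times described in the context. Conclusion. For all $k,n\in\mathbb N$, $$\mathbf P(\tau_k\ge n)\le Ce^{-\rho n},\qquad C:=\frac{1}{1-(1-\delta_1)^{v-1}\delta_2},\quad \rho:=\frac1v\ln C.$$
   Context: Chain. The chain $r(n)=(r_i(n))_{i\le n}$ starts from the configuration $r(0)=(r_i(0))_{i\le0}\in\{0,1\}^{\{\dots,-1,0\}}$. Given $r(n)$, let $m_n:=\sup\{i\le n:r_i(n)=1\}$. Then $r(n+1)$ extends $r(n)$ by one symbol, which is $1$ with probability $\mathbf p_{k_nj_n}$ and $0$ otherwise. Here $k_n=n-m_n$ and $j_n$ is the number of the word $(r_{m_n-v+1}(n),\dots,r_{m_n}(n))$. Auxiliary Markov chain. $Y(n):=(n-m_n,(r_{m_n-v+1}(n),\dots,r_{m_n}(n)))$, and $y_0:=(0,(0,\dots,0,1))$. Regeneration times. $\tau_1:=\min\{n>0:Y(n)=y_0\}$ and $\tau_k:=\min\{n>\tau_1+\dots+\tau_{k-1}:Y(n)=y_0\}-(\tau_1+\dots+\tau_{k-1})$ for $k\ge2$. *)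

theory Defs
  imports "HOL-Probability.Probability"
begin

text \<open>The initial configuration r(0)
  is given by r0, where r0 i is the symbol at position -i (i = 0, 1, 2, ...).
  The bit sequence b gives the newly appended symbols: b i is the symbol at
  position i+1.\<close>
definition sym :: "(nat \<Rightarrow> bool) \<Rightarrow> (nat \<Rightarrow> bool) \<Rightarrow> int \<Rightarrow> bool" where
  "sym r0 b i = (if i \<le> 0 then r0 (nat (- i)) else b (nat (i - 1)))"

definition lastone :: "(nat \<Rightarrow> bool) \<Rightarrow> (nat \<Rightarrow> bool) \<Rightarrow> nat \<Rightarrow> int" where
  "lastone r0 b n = (GREATEST i::int. i \<le> int n \<and> sym r0 b i)"

definition word :: "nat \<Rightarrow> (nat \<Rightarrow> bool) \<Rightarrow> (nat \<Rightarrow> bool) \<Rightarrow> nat \<Rightarrow> bool list" where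
  "word v r0 b n = map (\<lambda>t. sym r0 b (lastone r0 b n - int v + 1 + int t)) [0..<v]"

definition Ystate :: "nat \<Rightarrow> (nat \<Rightarrow> bool) \<Rightarrow> (nat \<Rightarrow> bool) \<Rightarrow> nat \<Rightarrow> nat \<times> bool list" where
  "Ystate v r0 b n = (nat (int n - lastone r0 b n), word v r0 b n)"

definition y0 :: "nat \<Rightarrow> nat \<times> bool list" where
  "y0 v = (0, replicate (v - 1) False @ [True])"

primrec ret_time :: "nat \<Rightarrow> (nat \<Rightarrow> bool) \<Rightarrow> (nat \<Rightarrow> bool) \<Rightarrow> nat \<Rightarrow> enat" where
  "ret_time v r0 b 0 = 0"
| "ret_time v r0 b (Suc k) =
     (case ret_time v r0 b k of
        \<infinity> \<Rightarrow> \<infinity>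
      | enat a \<Rightarrow> (if \<exists>n>a. Ystate v r0 b n = y0 v
                  then enat (LEAST n. n > a \<and> Ystate v r0 b n = y0 v) else \<infinity>))"

definition tau :: "nat \<Rightarrow> (nat \<Rightarrow> bool) \<Rightarrow> (nat \<Rightarrow> bool) \<Rightarrow> nat \<Rightarrow> enat" where
  "tau v r0 b k = (case ret_time v r0 b (k - 1) of
       \<infinity> \<Rightarrow> \<infinity>
     | enat a \<Rightarrow> ret_time v r0 b k - enat a)"

text \<open>Transition probability of appending a 1 at time n, given the first n appended
  bits xs (the state at time n only depends on them).\<close>
definition step_prob :: "nat \<Rightarrow> (nat \<Rightarrow> bool list \<Rightarrow> real) \<Rightarrow> (nat \<Rightarrow> bool) \<Rightarrow> bool list \<Rightarrow> real" where
  "step_prob v p r0 xs =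
     (let Y = Ystate v r0 (\<lambda>i. if i < length xs then xs ! i else False) (length xs)
      in p (fst Y) (snd Y))"

end

theory Submission
  imports Defs
begin

(* Whatever the history, the next v appended symbols are 0...01 with conditional probability
   at least q = (1 - delta1)^(v-1) * delta2, and this word puts the auxiliary chain Y back at y0.
   Since the event {T_k = a} is determined by the first a symbols, the estimate can be applied
   afresh after every return time: each further block of v steps misses y0 with probability at
   most 1 - q. Hence P(tau_(k+1) > m) <= (1 - q)^(m div v); in particular every T_k is almost
   surely finite, and (1 - q)^((n - 1) div v) <= C exp(-rho n). *)

lemma lastone_le_and_sym:
  assumes "\<exists>i. r0 i"
  shows "lastone r0 b n \<le> int n" and "sym r0 b (lastone r0 b n)"
proof -
  obtain i0 where "r0 i0"
    using assms by blast
  define S where "S = {i \<in> {- int i0..int n}. sym r0 b i}"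
  have fin: "finite S"
    unfolding S_def by (rule finite_subset[OF _ finite_atLeastAtMost_int]) auto
  have mem: "- int i0 \<in> S"
    using \<open>r0 i0\<close> by (simp add: S_def sym_def)
  have "Max S \<in> S"
    using fin mem by (intro Max_in) auto
  have "lastone r0 b n = Max S"
    unfolding lastone_def
  proof (rule Greatest_equality)
    show "Max S \<le> int n \<and> sym r0 b (Max S)"
      using \<open>Max S \<in> S\<close> by (simp add: S_def)
  next
    fix i assume i: "i \<le> int n \<and> sym r0 b i"
    show "i \<le> Max S"
    proof (cases "- int i0 \<le> i")
      case True
      then have "i \<in> S"
        using i by (simp add: S_def)
      then show ?thesis
        using fin by simp
    next
      case False
      then show ?thesis
        using Max_ge[OF fin mem] by linarith
    qed
  qed
  then show "lastone r0 b n \<le> int n" and "sym r0 b (lastone r0 b n)"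
    using \<open>Max S \<in> S\<close> by (simp_all add: S_def)
qed

lemma lastone_cong:
  assumes "\<And>i. i < n \<Longrightarrow> b i = b' i"
  shows "lastone r0 b n = lastone r0 b' n"
proof -
  have "sym r0 b i = sym r0 b' i" if "i \<le> int n" for i
    using assms that by (auto simp: sym_def)
  then show ?thesis
    unfolding lastone_def by (metis (no_types, lifting))
qed

lemma Ystate_cong:
  assumes "\<exists>i. r0 i" and "\<And>i. i < n \<Longrightarrow> b i = b' i"
  shows "Ystate v r0 b n = Ystate v r0 b' n"
proof -
  have last_eq: "lastone r0 b n = lastone r0 b' n"
    using assms(2) by (rule lastone_cong)
  have "sym r0 b i = sym r0 b' i" if "i \<le> lastone r0 b n" for i
    using assms(2) lastone_le_and_sym(1)[OF assms(1), of b n] that by (auto simp: sym_def)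
  then have "word v r0 b n = word v r0 b' n"
    unfolding word_def last_eq[symmetric] by auto
  then show ?thesis
    by (simp add: Ystate_def last_eq)
qed

lemma length_word_and_last:
  assumes "\<exists>i. r0 i" and "v \<ge> 1"
  shows "length (word v r0 b n) = v" and "last (word v r0 b n)"
  using assms lastone_le_and_sym(2)[OF assms(1)] by (simp_all add: word_def last_map)

lemma length_snd_y0: "v \<ge> 1 \<Longrightarrow> length (snd (y0 v)) = v"
  by (simp add: y0_def)

lemma Ystate_after_pattern:
  assumes "v \<ge> 1" and pattern: "\<And>i. i < v \<Longrightarrow> b (L + i) = snd (y0 v) ! i"
  shows "Ystate v r0 b (L + v) = y0 v"
proof -
  define w where "w = snd (y0 v)"
  have y0_eq: "y0 v = (0, w)" and len: "length w = v"
    using assms(1) by (simp_all add: y0_def w_def)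
  have sym_shift: "sym r0 b (int (L + i) + 1) = b (L + i)" for i
    by (simp add: sym_def nat_int_add)
  have "b (L + (v - 1))"
    using pattern[of "v - 1"] assms(1) by (simp add: y0_def nth_append)
  then have "sym r0 b (int (L + v))"
    using sym_shift[of "v - 1"] assms(1) by (simp add: add.assoc)
  then have last_eq: "lastone r0 b (L + v) = int (L + v)"
    unfolding lastone_def by (intro Greatest_equality) auto
  have "word v r0 b (L + v) = map (\<lambda>i. b (L + i)) [0..<v]"
    using sym_shift by (simp add: word_def last_eq add_ac)
  also have "\<dots> = map ((!) w) [0..<length w]"
    using pattern len by (simp add: w_def)
  also have "\<dots> = w"
    by (rule map_nth)
  finally show ?thesis
    by (simp add: Ystate_def y0_eq last_eq)
qed

lemma ret_time_Suc_eq_enat: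
  "ret_time v r0 b (Suc k) = enat a \<longleftrightarrow>
     (\<exists>a'. ret_time v r0 b k = enat a' \<and> a' < a \<and> Ystate v r0 b a = y0 v
           \<and> (\<forall>t. a' < t \<and> t < a \<longrightarrow> Ystate v r0 b t \<noteq> y0 v))"
proof (cases "ret_time v r0 b k")
  case (enat a')
  let ?hit = "\<lambda>n. a' < n \<and> Ystate v r0 b n = y0 v"
  have "ret_time v r0 b (Suc k) = enat a \<longleftrightarrow> Ex ?hit \<and> (LEAST n. ?hit n) = a"
    using enat by simp
  also have "\<dots> \<longleftrightarrow> ?hit a \<and> (\<forall>t. a' < t \<and> t < a \<longrightarrow> Ystate v r0 b t \<noteq> y0 v)"
  proof
    assume "Ex ?hit \<and> (LEAST n. ?hit n) = a"
    then show "?hit a \<and> (\<forall>t. a' < t \<and> t < a \<longrightarrow> Ystate v r0 b t \<noteq> y0 v)"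
      using LeastI_ex[of ?hit] not_less_Least[of _ ?hit] by blast
  next
    assume first: "?hit a \<and> (\<forall>t. a' < t \<and> t < a \<longrightarrow> Ystate v r0 b t \<noteq> y0 v)"
    then have "(LEAST n. ?hit n) = a"
      by (intro Least_equality) (use not_le in blast)+
    then show "Ex ?hit \<and> (LEAST n. ?hit n) = a"
      using first by blast
  qed
  finally show ?thesis
    using enat by auto
qed simp

lemma ret_time_cong:
  assumes "\<exists>i. r0 i"
  shows "ret_time v r0 b k = enat a \<Longrightarrow> (\<And>i. i < a \<Longrightarrow> b i = b' i) \<Longrightarrow>
           ret_time v r0 b' k = enat a"
proof (induction k arbitrary: a)
  case 0
  then show ?case by (simp add: zero_enat_def)
next
  case (Suc k)
  obtain a' where a': "ret_time v r0 b k = enat a'" "a' < a" "Ystate v r0 b a = y0 v"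
    "\<forall>t. a' < t \<and> t < a \<longrightarrow> Ystate v r0 b t \<noteq> y0 v"
    using Suc.prems(1) ret_time_Suc_eq_enat by blast
  have same_Y: "Ystate v r0 b t = Ystate v r0 b' t" if "t \<le> a" for t
    by (rule Ystate_cong[OF assms]) (use Suc.prems(2) that in auto)
  have "ret_time v r0 b' k = enat a'"
    using Suc.IH[OF a'(1)] Suc.prems(2) a'(2) by simp
  moreover have "Ystate v r0 b' a = y0 v"
    using a'(3) same_Y[of a] by simp
  moreover have "\<forall>t. a' < t \<and> t < a \<longrightarrow> Ystate v r0 b' t \<noteq> y0 v"
    using a'(4) same_Y less_imp_le by metis
  ultimately show ?case
    using a'(2) ret_time_Suc_eq_enat by blast
qed

lemma no_visit_before_next_return:
  assumes "ret_time v r0 b k = enat a" and "enat (Suc m) \<le> tau v r0 b (Suc k)"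
    and "a < t" and "t \<le> a + m"
  shows "Ystate v r0 b t \<noteq> y0 v"
proof (cases "ret_time v r0 b (Suc k)")
  case (enat c)
  then obtain a' where "ret_time v r0 b k = enat a'"
    "\<forall>t. a' < t \<and> t < c \<longrightarrow> Ystate v r0 b t \<noteq> y0 v"
    using ret_time_Suc_eq_enat by blast
  moreover have "a + m < c"
    using assms(1,2) enat by (simp add: tau_def)
  ultimately show ?thesis
    using assms by auto
next
  case infinity
  then show ?thesis
    using assms(1,3) by (auto split: if_splits)
qed

locale bit_process = prob_space M for M :: "'a measure" +
  fixes b :: "nat \<Rightarrow> 'a \<Rightarrow> bool" and s :: "bool list \<Rightarrow> real" and \<delta>1 \<delta>2 :: real
  assumes measurable_bit [measurable]: "\<And>i. b i \<in> measurable M (count_space UNIV)"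
    and law: "\<And>xs. measure M {\<omega> \<in> space M. (\<forall>i<length xs. b i \<omega> = xs ! i) \<and> b (length xs) \<omega>}
                 = s xs * measure M {\<omega> \<in> space M. \<forall>i<length xs. b i \<omega> = xs ! i}"
    and s_bounds: "\<And>xs. \<delta>2 \<le> s xs \<and> s xs \<le> \<delta>1"
    and \<delta>2_pos: "0 < \<delta>2" and \<delta>1_less_1: "\<delta>1 < 1"
begin

definition history :: "nat \<Rightarrow> 'a \<Rightarrow> bool list" where
  "history n \<omega> = map (\<lambda>i. b i \<omega>) [0..<n]"

definition history_event :: "nat \<Rightarrow> (bool list \<Rightarrow> bool) \<Rightarrow> 'a set" where
  "history_event n P = {\<omega> \<in> space M. P (history n \<omega>)}"

definition min_prob :: "bool \<Rightarrow> real" where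
  "min_prob c = (if c then \<delta>2 else 1 - \<delta>1)"

lemma length_history [simp]: "length (history n \<omega>) = n"
  by (simp add: history_def)

lemma nth_history [simp]: "i < n \<Longrightarrow> history n \<omega> ! i = b i \<omega>"
  by (simp add: history_def)

lemma history_Suc: "history (Suc n) \<omega> = history n \<omega> @ [b n \<omega>]"
  by (simp add: history_def)

lemma take_history: "m \<le> n \<Longrightarrow> take m (history n \<omega>) = history m \<omega>"
  by (simp add: history_def take_map)

lemma history_eq_iff: "length xs = n \<Longrightarrow> history n \<omega> = xs \<longleftrightarrow> (\<forall>i<n. b i \<omega> = xs ! i)"
  by (auto simp: list_eq_iff_nth_eq)

lemma measurable_history: "history n \<in> measurable M (count_space UNIV)"
proof (subst measurable_count_space_eq2_countable, intro conjI ballI)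
  fix xs :: "bool list"
  show "history n -` {xs} \<inter> space M \<in> sets M"
  proof (cases "length xs = n")
    case True
    then have "history n -` {xs} \<inter> space M = {\<omega> \<in> space M. \<forall>i<n. b i \<omega> = xs ! i}"
      by (auto simp: history_eq_iff)
    also have "\<dots> \<in> sets M"
      by measurable
    finally show ?thesis .
  next
    case False
    then have "history n -` {xs} = {}"
      by (auto dest: arg_cong[of _ _ length])
    then show ?thesis
      by simp
  qed
qed auto

lemma sets_history_event [measurable]: "history_event n P \<in> sets M"
proof -
  have "history_event n P = history n -` {xs. P xs} \<inter> space M"
    by (auto simp: history_event_def)
  also have "\<dots> \<in> sets M"
    by (rule measurable_sets[OF measurable_history]) simp
  finally show ?thesis .
qed

lemma measure_history_event_sum:
  assumes "A \<in> sets M"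
  shows "measure M (history_event n P \<inter> A) =
           (\<Sum>xs | length xs = n \<and> P xs. measure M (history_event n ((=) xs) \<inter> A))"
proof -
  have split: "history_event n P \<inter> A =
      (\<Union>xs \<in> {xs. length xs = n \<and> P xs}. history_event n ((=) xs) \<inter> A)"
    by (auto simp: history_event_def)
  have "finite {xs :: bool list. length xs = n \<and> P xs}"
    by (rule finite_subset[OF _ finite_list_length[of n]]) auto
  then show ?thesis
    unfolding split
  proof (rule finite_measure_finite_Union)
    show "(\<lambda>xs. history_event n ((=) xs) \<inter> A) ` {xs. length xs = n \<and> P xs} \<subseteq> sets M"
      using assms by auto
    show "disjoint_family_on (\<lambda>xs. history_event n ((=) xs) \<inter> A) {xs. length xs = n \<and> P xs}"
      by (auto simp: disjoint_family_on_def history_event_def)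
  qed
qed

lemma measure_cylinder_bit:
  assumes "length xs = n"
  shows "measure M (history_event n ((=) xs) \<inter> {\<omega> \<in> space M. b n \<omega> = c}) =
           (if c then s xs else 1 - s xs) * measure M (history_event n ((=) xs))"
proof -
  let ?C = "history_event n ((=) xs)"
  have C: "?C = {\<omega> \<in> space M. \<forall>i<length xs. b i \<omega> = xs ! i}"
    using assms by (auto simp: history_event_def history_eq_iff[symmetric])
  have ones_eq: "{\<omega> \<in> space M. \<forall>i<length xs. b i \<omega> = xs ! i} \<inter> {\<omega> \<in> space M. b n \<omega>} =
      {\<omega> \<in> space M. (\<forall>i<length xs. b i \<omega> = xs ! i) \<and> b (length xs) \<omega>}"
    using assms by auto
  have ones: "measure M (?C \<inter> {\<omega> \<in> space M. b n \<omega>}) = s xs * measure M ?C"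
    unfolding ones_eq C by (rule law)
  show ?thesis
  proof (cases c)
    case False
    have "?C \<inter> {\<omega> \<in> space M. b n \<omega> = c} = ?C - ?C \<inter> {\<omega> \<in> space M. b n \<omega>}"
      using False by (auto simp: history_event_def)
    then show ?thesis
      using False ones by (simp add: finite_measure_Diff' left_diff_distrib)
  qed (use ones in simp)
qed

lemma history_event_bit_ge:
  "min_prob c * measure M (history_event n P) \<le> measure M {\<omega> \<in> history_event n P. b n \<omega> = c}"
proof -
  let ?B = "{\<omega> \<in> space M. b n \<omega> = c}"
  have cylinder: "min_prob c * measure M (history_event n ((=) xs))
                    \<le> measure M (history_event n ((=) xs) \<inter> ?B)" if "length xs = n" for xs
    using measure_cylinder_bit[OF that, of c] s_bounds[of xs]
    by (cases c) (auto simp: min_prob_def intro!: mult_right_mono)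
  have inter_space: "history_event n Q \<inter> space M = history_event n Q" for Q
    by (auto simp: history_event_def)
  have "min_prob c * measure M (history_event n P)
          = (\<Sum>xs | length xs = n \<and> P xs. min_prob c * measure M (history_event n ((=) xs)))"
    using measure_history_event_sum[of "space M" n P] by (simp add: sum_distrib_left inter_space)
  also have "\<dots> \<le> (\<Sum>xs | length xs = n \<and> P xs. measure M (history_event n ((=) xs) \<inter> ?B))"
    using cylinder by (intro sum_mono) simp
  also have "\<dots> = measure M {\<omega> \<in> history_event n P. b n \<omega> = c}"
    using measure_history_event_sum[of ?B n P] by (simp add: history_event_def Int_def conj_ac)
  finally show ?thesis .
qed

lemma min_prob_pos: "0 < min_prob c"
  using \<delta>2_pos \<delta>1_less_1 by (simp add: min_prob_def)

lemma history_event_pattern_ge: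
  "prod_list (map min_prob cs) * measure M (history_event n P)
     \<le> measure M {\<omega> \<in> history_event n P. \<forall>i<length cs. b (n + i) \<omega> = cs ! i}"
proof (induction cs arbitrary: n P)
  case Nil
  then show ?case by simp
next
  case (Cons c cs)
  define P' where "P' zs \<longleftrightarrow> P (butlast zs) \<and> last zs = c" for zs
  have extend: "history_event (Suc n) P' = {\<omega> \<in> history_event n P. b n \<omega> = c}"
    by (auto simp: history_event_def P'_def history_Suc)
  have "prod_list (map min_prob (c # cs)) * measure M (history_event n P)
          = prod_list (map min_prob cs) * (min_prob c * measure M (history_event n P))"
    by simp
  also have "\<dots> \<le> prod_list (map min_prob cs) * measure M (history_event (Suc n) P')"
    unfolding extend using history_event_bit_ge min_prob_pos
    by (intro mult_left_mono prod_list_nonneg) (auto intro: less_imp_le)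
  also have "\<dots> \<le> measure M {\<omega> \<in> history_event (Suc n) P'. \<forall>i<length cs. b (Suc n + i) \<omega> = cs ! i}"
    by (rule Cons.IH)
  also have "\<dots> = measure M {\<omega> \<in> history_event n P. \<forall>i<length (c # cs). b (n + i) \<omega> = (c # cs) ! i}"
    unfolding extend by (simp add: All_less_Suc2 conj_ac)
  finally show ?case .
qed

end

definition seq_of :: "bool list \<Rightarrow> nat \<Rightarrow> bool" where
  "seq_of xs i \<longleftrightarrow> i < length xs \<and> xs ! i"

locale regeneration_chain = bit_process M b "step_prob v p r0" \<delta>1 \<delta>2
  for M :: "'a measure" and b v p \<delta>1 \<delta>2 r0 +
  assumes v_pos: "v \<ge> 1" and initial_one: "\<exists>i. r0 i"
begin

abbreviation bits :: "'a \<Rightarrow> nat \<Rightarrow> bool" where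
  "bits \<omega> \<equiv> \<lambda>i. b i \<omega>"

definition pattern_prob :: real where
  "pattern_prob = (1 - \<delta>1) ^ (v - 1) * \<delta>2"

definition no_visit :: "nat \<Rightarrow> nat \<Rightarrow> 'a set" where
  "no_visit a c = {\<omega> \<in> space M. \<forall>t. a < t \<and> t \<le> c \<longrightarrow> Ystate v r0 (bits \<omega>) t \<noteq> y0 v}"

definition return_at :: "nat \<Rightarrow> nat \<Rightarrow> 'a set" where
  "return_at k a = {\<omega> \<in> space M. ret_time v r0 (bits \<omega>) k = enat a}"

definition late_return :: "nat \<Rightarrow> nat \<Rightarrow> 'a set" where
  "late_return k m = (\<Union>a. return_at k a \<inter> no_visit a (a + m))"

lemma prod_min_prob_y0: "prod_list (map min_prob (snd (y0 v))) = pattern_prob"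
  by (simp add: y0_def min_prob_def pattern_prob_def prod_list_replicate)

lemma pattern_prob_pos: "0 < pattern_prob"
  using \<delta>2_pos \<delta>1_less_1 by (simp add: pattern_prob_def)

lemma pattern_prob_less_1: "pattern_prob < 1"
proof -
  have "(1 - \<delta>1) ^ (v - 1) \<le> 1"
    using \<delta>2_pos \<delta>1_less_1 s_bounds[of "[]"] by (auto intro: power_le_one)
  then have "pattern_prob \<le> \<delta>2"
    using \<delta>2_pos mult_right_mono[of _ 1 \<delta>2] by (simp add: pattern_prob_def)
  then show ?thesis
    using \<delta>1_less_1 s_bounds[of "[]"] by linarith
qed

lemma Ystate_seq_of_history:
  "t \<le> n \<Longrightarrow> Ystate v r0 (seq_of (history n \<omega>)) t = Ystate v r0 (bits \<omega>) t"
  by (rule Ystate_cong[OF initial_one]) (simp add: seq_of_def)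

lemma history_event_inter_no_visit:
  assumes "n \<le> c"
  shows "history_event n P \<inter> no_visit a c =
    history_event c (\<lambda>zs. P (take n zs) \<and> (\<forall>t. a < t \<and> t \<le> c \<longrightarrow> Ystate v r0 (seq_of zs) t \<noteq> y0 v))"
  using assms by (auto simp: history_event_def no_visit_def take_history Ystate_seq_of_history)

lemma sets_no_visit [measurable]: "no_visit a c \<in> sets M"
proof -
  have "no_visit a c = history_event 0 (\<lambda>_. True) \<inter> no_visit a c"
    unfolding history_event_def no_visit_def by blast
  then show ?thesis
    by (simp add: history_event_inter_no_visit)
qed

lemma no_visit_one_block:
  "measure M (history_event n P \<inter> no_visit n (n + v)) \<le> (1 - pattern_prob) * measure M (history_event n P)"
proof -
  let ?A = "history_event n P"
  let ?S = "{\<omega> \<in> ?A. \<forall>i<v. b (n + i) \<omega> = snd (y0 v) ! i}"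
  have "?A \<inter> no_visit n (n + v) \<subseteq> ?A - ?S"
  proof
    fix \<omega> assume \<omega>: "\<omega> \<in> ?A \<inter> no_visit n (n + v)"
    have "\<omega> \<notin> ?S"
    proof
      assume "\<omega> \<in> ?S"
      then have "Ystate v r0 (bits \<omega>) (n + v) = y0 v"
        by (intro Ystate_after_pattern[OF v_pos]) auto
      then show False
        using \<omega> v_pos by (auto simp: no_visit_def)
    qed
    then show "\<omega> \<in> ?A - ?S"
      using \<omega> by blast
  qed
  moreover have "?S \<subseteq> ?A"
    by blast
  moreover have "pattern_prob * measure M ?A \<le> measure M ?S"
    using history_event_pattern_ge[of "snd (y0 v)" n P] v_pos
    by (simp only: prod_min_prob_y0 length_snd_y0)
  ultimately show ?thesis
    using finite_measure_mono[of "?A \<inter> no_visit n (n + v)" "?A - ?S"]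
    by (simp add: finite_measure_Diff left_diff_distrib)
qed

lemma no_visit_bound:
  "measure M (history_event n P \<inter> no_visit n (n + v * j))
     \<le> (1 - pattern_prob) ^ j * measure M (history_event n P)"
proof (induction j arbitrary: n P)
  case 0
  have "history_event n P \<inter> no_visit n n = history_event n P"
    by (auto simp: history_event_def no_visit_def)
  then show ?case
    by simp
next
  case (Suc j)
  define P' where "P' =
    (\<lambda>zs. P (take n zs) \<and> (\<forall>t. n < t \<and> t \<le> n + v \<longrightarrow> Ystate v r0 (seq_of zs) t \<noteq> y0 v))"
  have first_block: "history_event (n + v) P' = history_event n P \<inter> no_visit n (n + v)"
    by (simp add: P'_def history_event_inter_no_visit)
  have "history_event n P \<inter> no_visit n (n + v * Suc j)
          = history_event (n + v) P' \<inter> no_visit (n + v) (n + v + v * j)"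
    unfolding first_block by (auto simp: no_visit_def add.assoc) (metis add.assoc not_le)
  then have "measure M (history_event n P \<inter> no_visit n (n + v * Suc j))
               \<le> (1 - pattern_prob) ^ j * measure M (history_event (n + v) P')"
    using Suc.IH[of "n + v" P'] by simp
  also have "\<dots> \<le> (1 - pattern_prob) ^ j * ((1 - pattern_prob) * measure M (history_event n P))"
    unfolding first_block using pattern_prob_less_1
    by (intro mult_left_mono no_visit_one_block) simp
  finally show ?case
    by (simp add: mult_ac)
qed

lemma return_at_eq_history_event:
  "return_at k a = history_event a (\<lambda>zs. ret_time v r0 (seq_of zs) k = enat a)"
proof -
  have "ret_time v r0 (seq_of (history a \<omega>)) k = enat a \<longleftrightarrow> ret_time v r0 (bits \<omega>) k = enat a" for \<omega>
    by (intro iffI; erule ret_time_cong[OF initial_one]) (simp_all add: seq_of_def)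
  then show ?thesis
    by (simp add: return_at_def history_event_def)
qed

lemma sets_return_at [measurable]: "return_at k a \<in> sets M"
  by (simp add: return_at_eq_history_event)

lemma sets_late_return [measurable]: "late_return k m \<in> sets M"
  by (simp add: late_return_def)

lemma measure_late_return: "measure M (late_return k (v * j)) \<le> (1 - pattern_prob) ^ j"
proof -
  let ?G = "\<lambda>a. return_at k a \<inter> no_visit a (a + v * j)"
  have disjoint: "disjoint_family (return_at k)"
    by (auto simp: disjoint_family_on_def return_at_def)
  then have "disjoint_family ?G"
    by (auto simp: disjoint_family_on_def)
  then have G_sums: "(\<lambda>a. measure M (?G a)) sums measure M (late_return k (v * j))"
    unfolding late_return_def by (intro finite_measure_UNION) auto
  have return_sums: "(\<lambda>a. (1 - pattern_prob) ^ j * measure M (return_at k a))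
                   sums ((1 - pattern_prob) ^ j * measure M (\<Union>a. return_at k a))"
    using disjoint by (intro sums_mult finite_measure_UNION) auto
  have G_le: "measure M (?G a) \<le> (1 - pattern_prob) ^ j * measure M (return_at k a)" for a
    unfolding return_at_eq_history_event by (rule no_visit_bound)
  have "measure M (late_return k (v * j)) \<le> (1 - pattern_prob) ^ j * measure M (\<Union>a. return_at k a)"
    by (rule sums_le[OF G_le G_sums return_sums])
  also have "\<dots> \<le> (1 - pattern_prob) ^ j"
    using pattern_prob_less_1 by (intro mult_left_le) auto
  finally show ?thesis .
qed

lemma late_return_antimono: "m \<le> m' \<Longrightarrow> late_return k m' \<subseteq> late_return k m"
  by (auto simp: late_return_def no_visit_def)

lemma tau_ge_subset_late_return:
  "{\<omega> \<in> space M. ret_time v r0 (bits \<omega>) k \<noteq> \<infinity> \<and> enat (Suc m) \<le> tau v r0 (bits \<omega>) (Suc k)}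
     \<subseteq> late_return k m"
  using no_visit_before_next_return by (fastforce simp: late_return_def return_at_def no_visit_def)

lemma sets_ret_time_infinite [measurable]:
  "{\<omega> \<in> space M. ret_time v r0 (bits \<omega>) k = \<infinity>} \<in> sets M"
proof -
  have "{\<omega> \<in> space M. ret_time v r0 (bits \<omega>) k = \<infinity>} = space M - (\<Union>a. return_at k a)"
    by (auto simp: return_at_def)
  then show ?thesis
    by simp
qed

lemma ret_time_infinite_null:
  "{\<omega> \<in> space M. ret_time v r0 (bits \<omega>) k = \<infinity>} \<in> null_sets M"
proof (induction k)
  case 0
  then show ?case
    by (simp add: zero_enat_def)
next
  case (Suc k)
  let ?never = "\<Inter>j. late_return k (v * j)"
  have "measure M ?never \<le> (1 - pattern_prob) ^ j" for j
    by (rule order_trans[OF finite_measure_mono measure_late_return]) auto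
  moreover have "(\<lambda>j. (1 - pattern_prob) ^ j) \<longlonglongrightarrow> 0"
    using pattern_prob_pos pattern_prob_less_1 by (intro LIMSEQ_realpow_zero) auto
  ultimately have "measure M ?never \<le> 0"
    by (intro LIMSEQ_le_const) auto
  then have never_null: "?never \<in> null_sets M"
    by (auto simp: null_sets_def emeasure_eq_measure measure_nonneg order.antisym)
  have subset: "{\<omega> \<in> space M. ret_time v r0 (bits \<omega>) (Suc k) = \<infinity>}
                   \<subseteq> {\<omega> \<in> space M. ret_time v r0 (bits \<omega>) k = \<infinity>} \<union> ?never"
  proof
    fix \<omega> assume \<omega>: "\<omega> \<in> {\<omega> \<in> space M. ret_time v r0 (bits \<omega>) (Suc k) = \<infinity>}"
    show "\<omega> \<in> {\<omega> \<in> space M. ret_time v r0 (bits \<omega>) k = \<infinity>} \<union> ?never"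
    proof (cases "ret_time v r0 (bits \<omega>) k")
      case (enat a)
      then have "enat (Suc m) \<le> tau v r0 (bits \<omega>) (Suc k)" for m
        using \<omega> by (simp add: tau_def)
      then show ?thesis
        using \<omega> enat tau_ge_subset_late_return by blast
    qed (use \<omega> in simp)
  qed
  have "{\<omega> \<in> space M. ret_time v r0 (bits \<omega>) k = \<infinity>} \<union> ?never \<in> null_sets M"
    using Suc.IH never_null by (rule null_sets.Un)
  then show ?case
    by (rule null_sets_subset[OF _ sets_ret_time_infinite subset])
qed

lemma tail_bound:
  "measure M {\<omega> \<in> space M. enat n \<le> tau v r0 (bits \<omega>) (Suc k)} \<le> (1 - pattern_prob) ^ ((n - 1) div v)"
proof (cases n)
  case 0
  then show ?thesis
    by simp
next
  case (Suc m)
  have "{\<omega> \<in> space M. enat n \<le> tau v r0 (bits \<omega>) (Suc k)}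
          \<subseteq> late_return k (v * (m div v)) \<union> {\<omega> \<in> space M. ret_time v r0 (bits \<omega>) k = \<infinity>}"
    using tau_ge_subset_late_return[of k m] late_return_antimono[of "v * (m div v)" m k] Suc
    by (auto simp: mult.commute[of v])
  then have "measure M {\<omega> \<in> space M. enat n \<le> tau v r0 (bits \<omega>) (Suc k)}
      \<le> measure M (late_return k (v * (m div v)) \<union> {\<omega> \<in> space M. ret_time v r0 (bits \<omega>) k = \<infinity>})"
    by (rule finite_measure_mono) simp
  also have "\<dots> = measure M (late_return k (v * (m div v)))"
    using ret_time_infinite_null by (intro measure_Un_null_set) simp_all
  also have "\<dots> \<le> (1 - pattern_prob) ^ (m div v)"
    by (rule measure_late_return)
  finally show ?thesis
    using Suc by simp
qed

end

lemma power_div_le_exp_rate: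
  fixes x :: real and v n :: nat
  assumes "0 < x" "x < 1" "v \<ge> 1"
  shows "x ^ ((n - 1) div v) \<le> (1 / x) * exp (- ((1 / real v) * ln (1 / x)) * real n)"
proof -
  define j r where "j = (n - 1) div v" and "r = (n - 1) mod v"
  have "v * j + r = n - 1" and "r < v"
    using assms(3) by (simp_all add: j_def r_def)
  then have "n \<le> v * j + v"
    by arith
  then have "real n \<le> real v * real j + real v"
    by (metis of_nat_add of_nat_le_iff of_nat_mult)
  then have "real n / real v - 1 \<le> real j"
    using assms(3) by (simp add: field_simps)
  then have "x powr real j \<le> x powr (real n / real v - 1)"
    using assms(1,2) by (intro powr_mono') auto
  also have "\<dots> = (1 / x) * exp (- ((1 / real v) * ln (1 / x)) * real n)"
    using assms(1) by (simp add: powr_def ln_div exp_diff algebra_simps)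
  finally show ?thesis
    using assms(1) by (simp add: j_def powr_realpow)
qed

theorem lemma4p1:
  fixes M :: "'a measure" and b :: "nat \<Rightarrow> 'a \<Rightarrow> bool"
    and v :: nat and p :: "nat \<Rightarrow> bool list \<Rightarrow> real" and \<delta>1 \<delta>2 :: real
    and r0 :: "nat \<Rightarrow> bool"
  assumes "prob_space M"
    and meas: "\<And>i. b i \<in> measurable M (count_space UNIV)"
    and v: "v \<ge> 1"
    and delta: "1 > \<delta>1" "\<delta>1 > \<delta>2" "\<delta>2 > 0"
    and pbound: "\<And>k w. length w = v \<Longrightarrow> last w \<Longrightarrow> \<delta>2 \<le> p k w \<and> p k w \<le> \<delta>1"
    and init: "\<exists>i. r0 i"
    and law: "\<And>xs. measure M {\<omega> \<in> space M. (\<forall>i<length xs. b i \<omega> = xs ! i) \<and> b (length xs) \<omega>}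
                 = step_prob v p r0 xs * measure M {\<omega> \<in> space M. \<forall>i<length xs. b i \<omega> = xs ! i}"
    and k: "k \<ge> 1"
  shows "measure M {\<omega> \<in> space M. tau v r0 (\<lambda>i. b i \<omega>) k \<ge> enat n}
           \<le> (1 / (1 - (1 - \<delta>1) ^ (v - 1) * \<delta>2))
             * exp (- ((1 / real v) * ln (1 / (1 - (1 - \<delta>1) ^ (v - 1) * \<delta>2))) * real n)"
proof -
  have step_bounds: "\<delta>2 \<le> step_prob v p r0 xs \<and> step_prob v p r0 xs \<le> \<delta>1" for xs
    using pbound length_word_and_last[OF init v] by (simp add: step_prob_def Ystate_def)
  interpret regeneration_chain M b v p \<delta>1 \<delta>2 r0
    by (intro regeneration_chain.intro bit_process.intro bit_process_axioms.intro
        regeneration_chain_axioms.intro) (fact assms step_bounds)+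
  obtain k' where k': "k = Suc k'"
    using k by (cases k) auto
  have "measure M {\<omega> \<in> space M. tau v r0 (\<lambda>i. b i \<omega>) k \<ge> enat n}
          \<le> (1 - pattern_prob) ^ ((n - 1) div v)"
    unfolding k' by (rule tail_bound)
  also have "\<dots> \<le> (1 / (1 - pattern_prob)) * exp (- ((1 / real v) * ln (1 / (1 - pattern_prob))) * real n)"
    using pattern_prob_pos pattern_prob_less_1 v by (intro power_div_le_exp_rate) auto
  finally show ?thesis
    by (simp add: pattern_prob_def)
qed

end
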